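(* Let $\mathcal{H}$ be a real Hilbert space, $A:\mathcal{H}\rightrightarrows\mathcal{H}$ maximal monotone, $p\geq2$ an integer, and $\varphi(\lambda,x)=\lambda^{1/(p-1)}\|x-(I+\lambda A)^{-1}x\|$ for $\lambda>0$. Then for all $x\in\mathcal{H}$ and $0<\lambda_1\leq\lambda_2$, \[ \left(\tfrac{\lambda_2}{\lambda_1}\right)^{\frac1{p-1}}\varphi(\lambda_1,x)\leq\varphi(\lambda_2,x)\leq\left(\tfrac{\lambda_2}{\lambda_1}\right)^{\frac p{p-1}}\varphi(\lambda_1,x). \] In addition, for any fixed $\lambda>0$, $\varphi(\lambda,x)=0$ if and only if $0\in Ax$.
   Context: $(I+\lambda A)^{-1}$ is the resolvent of $A$ of index $\lambda$. *)

theory Defs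
  imports "HOL-Analysis.Analysis"
begin

definition monotone_op :: "('a::real_inner \<Rightarrow> 'a set) \<Rightarrow> bool" where
  "monotone_op A \<longleftrightarrow>
     (\<forall>x y u v. u \<in> A x \<longrightarrow> v \<in> A y \<longrightarrow> inner (x - y) (u - v) \<ge> 0)"

definition maximal_monotone :: "('a::real_inner \<Rightarrow> 'a set) \<Rightarrow> bool" where
  "maximal_monotone A \<longleftrightarrow> monotone_op A \<and>
     (\<forall>B. monotone_op B \<and> (\<forall>x. A x \<subseteq> B x) \<longrightarrow> B = A)"

text \<open>Resolvent (I + \<lambda>A)^{-1} x: the unique y with x \<in> y + \<lambda> A y.\<close>
definition resolvent :: "('a::real_inner \<Rightarrow> 'a set) \<Rightarrow> real \<Rightarrow> 'a \<Rightarrow> 'a" where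
  "resolvent A lam x = (THE y. \<exists>u \<in> A y. x = y + lam *\<^sub>R u)"

definition phi :: "('a::real_inner \<Rightarrow> 'a set) \<Rightarrow> nat \<Rightarrow> real \<Rightarrow> 'a \<Rightarrow> real" where
  "phi A p lam x = lam powr (1 / (real p - 1)) * norm (x - resolvent A lam x)"

end

theory Submission
  imports Defs
begin

text \<open>
  Write \<open>J\<^sub>\<lambda>\<close> for the resolvent. If \<open>x = J\<^sub>\<lambda> x + \<lambda> u\<close> with
  \<open>u \<in> A (J\<^sub>\<lambda> x)\<close>, then \<open>\<phi>(\<lambda>, x) = \<lambda>\<^bsup>1/(p-1)\<^esup> \<lambda> \<parallel>u\<parallel>\<close>.
  For \<open>\<lambda>\<^sub>1 \<le> \<lambda>\<^sub>2\<close>, monotonicity of \<open>A\<close> and Cauchy-Schwarz give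
  \<open>(\<lambda>\<^sub>2 \<parallel>u\<^sub>2\<parallel> - \<lambda>\<^sub>1 \<parallel>u\<^sub>1\<parallel>) (\<parallel>u\<^sub>2\<parallel> - \<parallel>u\<^sub>1\<parallel>) \<le> 0\<close>,
  hence \<open>\<parallel>u\<^sub>2\<parallel> \<le> \<parallel>u\<^sub>1\<parallel>\<close> and \<open>\<lambda>\<^sub>1 \<parallel>u\<^sub>1\<parallel> \<le> \<lambda>\<^sub>2 \<parallel>u\<^sub>2\<parallel>\<close>,
  which are the two bounds; and \<open>\<phi>(\<lambda>, x) = 0\<close> iff \<open>u = 0\<close>.

  The substance is that \<open>J\<^sub>\<lambda>\<close> is defined everywhere (Minty's theorem). By the
  Debrunner-Flor lemma every monotone set \<open>G\<close> of pairs admits a point \<open>x\<close> with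
  \<open>\<langle>x - y, x + v\<rangle> \<le> 0\<close> for all \<open>(y, v) \<in> G\<close>, i.e. \<open>(x, -x)\<close> is
  monotonically related to \<open>G\<close>; applied to a shifted and scaled graph of \<open>A\<close>,
  maximality turns this point into a solution of \<open>z \<in> x + \<lambda> A x\<close>. Each condition
  says that \<open>x\<close> lies in the ball with diameter \<open>[y, -v]\<close>. For finitely many pairs,
  a minimiser of the largest of these quadratics over the hull of the centres lies in
  the hull of the active centres, where monotonicity makes the averaged quadratic
  nonpositive. The balls thus have the finite intersection property, and in a Hilbert
  space such a family of closed convex sets, one of them bounded, has a common point:
  by the parallelogram law, near-minimal-norm points of smaller and smaller finite
  intersections form a Cauchy sequence.
\<close>

section \<open>Closed convex sets in Hilbert space\<close>

lemma norm_diff_sq_midpoint: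
  fixes u w :: "'a::real_inner"
  shows "(norm (u - w))\<^sup>2 = 2 * (norm u)\<^sup>2 + 2 * (norm w)\<^sup>2 - 4 * (norm (midpoint u w))\<^sup>2"
  unfolding power2_norm_eq_inner midpoint_def
  by (simp add: inner_diff_left inner_diff_right inner_add_left inner_add_right inner_commute
      algebra_simps)

lemma convex_near_minimal_norm_diff:
  fixes u w :: "'a::real_inner"
  assumes "convex T" "u \<in> T" "w \<in> T" and lower: "\<And>z. z \<in> T \<Longrightarrow> d - e \<le> norm z"
    and u: "norm u \<le> d + e" and w: "norm w \<le> d + e" and "0 \<le> e"
  shows "(norm (u - w))\<^sup>2 \<le> 16 * e * (d + e)"
proof -
  define m where "m = norm (midpoint u w)"
  have "midpoint u w \<in> T"
    using convexD[OF \<open>convex T\<close> \<open>u \<in> T\<close> \<open>w \<in> T\<close>, of "1/2" "1/2"]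
    by (simp add: midpoint_def algebra_simps)
  then have m: "d - e \<le> m" "0 \<le> m" using lower by (auto simp: m_def)
  have "0 \<le> d + e" using u norm_ge_zero order_trans by blast
  then have "(norm u)\<^sup>2 \<le> (d + e)\<^sup>2" "(norm w)\<^sup>2 \<le> (d + e)\<^sup>2"
    using u w by (auto intro: power_mono)
  then have "(norm (u - w))\<^sup>2 \<le> 4 * ((d + e)\<^sup>2 - m\<^sup>2)"
    unfolding norm_diff_sq_midpoint m_def by argo
  also have "\<dots> \<le> 16 * e * (d + e)"
  proof (cases "0 \<le> d - e")
    case True
    then have "(d - e)\<^sup>2 \<le> m\<^sup>2" using m by (auto intro: power_mono)
    moreover have "(d + e)\<^sup>2 - (d - e)\<^sup>2 = 4 * (e * d)" by (simp add: power2_eq_square algebra_simps)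
    ultimately have "4 * ((d + e)\<^sup>2 - m\<^sup>2) \<le> 16 * (e * d)" by argo
    also have "\<dots> \<le> 16 * e * (d + e)" using \<open>0 \<le> e\<close> by (simp add: algebra_simps)
    finally show ?thesis .
  next
    case False
    then have "(d + e)\<^sup>2 \<le> 2 * e * (d + e)"
      using \<open>0 \<le> d + e\<close> by (simp add: power2_eq_square mult_right_mono)
    moreover have "0 \<le> e * (d + e)" using \<open>0 \<le> e\<close> \<open>0 \<le> d + e\<close> by simp
    ultimately show ?thesis using zero_le_power2[of m] by argo
  qed
  finally show ?thesis .
qed

lemma closed_Inter_nonempty_by_approximation:
  fixes x :: "nat \<Rightarrow> 'a::complete_space" and \<T> :: "'a set set"
  assumes closed: "\<And>T. T \<in> \<T> \<Longrightarrow> closed T" and "\<T> \<noteq> {}" and "\<epsilon> \<longlonglongrightarrow> 0"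
    and approx: "\<And>T m n. T \<in> \<T> \<Longrightarrow> \<exists>z\<in>T. dist z (x m) \<le> \<epsilon> m \<and> dist z (x n) \<le> \<epsilon> n"
  shows "\<Inter>\<T> \<noteq> {}"
proof -
  have "Cauchy x"
  proof (rule metric_CauchyI)
    fix e :: real assume "0 < e"
    then obtain M where M: "\<And>n. M \<le> n \<Longrightarrow> \<epsilon> n < e / 2"
      using order_tendstoD(2)[OF \<open>\<epsilon> \<longlonglongrightarrow> 0\<close>, of "e / 2"] by (auto simp: eventually_sequentially)
    obtain T where "T \<in> \<T>" using \<open>\<T> \<noteq> {}\<close> by blast
    have "dist (x m) (x n) < e" if "M \<le> m" "M \<le> n" for m n
    proof -
      obtain z where "dist z (x m) \<le> \<epsilon> m" "dist z (x n) \<le> \<epsilon> n"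
        using approx[OF \<open>T \<in> \<T>\<close>] by blast
      then show ?thesis using M[OF that(1)] M[OF that(2)] dist_triangle2[of "x m" "x n" z]
        by (simp add: dist_commute)
    qed
    then show "\<exists>M. \<forall>m\<ge>M. \<forall>n\<ge>M. dist (x m) (x n) < e" by blast
  qed
  then obtain l where "x \<longlonglongrightarrow> l" using convergent_def Cauchy_convergent_iff by blast
  have "l \<in> T" if "T \<in> \<T>" for T
  proof -
    have "\<forall>n. \<exists>z\<in>T. dist z (x n) \<le> \<epsilon> n" using approx[OF that] by blast
    then obtain z where z: "\<And>n. z n \<in> T" "\<And>n. dist (z n) (x n) \<le> \<epsilon> n" by metis
    have "(\<lambda>n. dist (z n) (x n)) \<longlonglongrightarrow> 0"
      by (rule Lim_null_comparison[OF _ \<open>\<epsilon> \<longlonglongrightarrow> 0\<close>]) (simp add: z(2))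
    moreover have "(\<lambda>n. dist (x n) l) \<longlonglongrightarrow> 0"
      using \<open>x \<longlonglongrightarrow> l\<close> by (rule tendsto_dist_iff[THEN iffD1])
    ultimately have "(\<lambda>n. dist (z n) (x n) + dist (x n) l) \<longlonglongrightarrow> 0"
      by (rule tendsto_add_zero)
    then have "(\<lambda>n. dist (z n) l) \<longlonglongrightarrow> 0"
      by (rule Lim_null_comparison[rotated]) (simp add: dist_triangle)
    then have "z \<longlonglongrightarrow> l" by (rule tendsto_dist_iff[THEN iffD2])
    then show ?thesis using closed_sequentially[OF closed[OF that]] z(1) by blast
  qed
  then show ?thesis by blast
qed

lemma sup_inf_normE:
  fixes \<T> :: "'a::real_normed_vector set set"
  assumes "\<T> \<noteq> {}" and bounded: "bounded (\<Union>\<T>)" and nonempty: "\<And>T. T \<in> \<T> \<Longrightarrow> T \<noteq> {}"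
  obtains d :: real where "\<And>T e. T \<in> \<T> \<Longrightarrow> 0 < e \<Longrightarrow> \<exists>z\<in>T. norm z < d + e"
    and "\<And>e. 0 < e \<Longrightarrow> \<exists>T\<in>\<T>. \<forall>z\<in>T. d - e \<le> norm z"
proof -
  obtain R where R: "\<And>T z. T \<in> \<T> \<Longrightarrow> z \<in> T \<Longrightarrow> norm z \<le> R"
    using bounded unfolding bounded_iff by blast
  define N where "N T = Inf (norm ` T)" for T :: "'a set"
  have bdd: "bdd_below (norm ` T)" for T :: "'a set" by (rule bdd_belowI[of _ 0]) auto
  have N_le: "N T \<le> norm z" if "z \<in> T" for T z
    unfolding N_def using that bdd by (intro cInf_lower) auto
  have N_less: "\<exists>z\<in>T. norm z < N T + e" if "T \<in> \<T>" "0 < e" for T e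
    using that nonempty[OF that(1)] cInf_less_iff[OF _ bdd, of T "N T + e"] unfolding N_def by auto
  have "N T \<le> R" if "T \<in> \<T>" for T
    using nonempty[OF that] N_le R[OF that] by (meson all_not_in_conv order_trans)
  then have bdd_N: "bdd_above (N ` \<T>)" by (intro bdd_aboveI[of _ R]) auto
  define d where "d = Sup (N ` \<T>)"
  show ?thesis
  proof (rule that[of d])
    fix T and e :: real assume "T \<in> \<T>" "0 < e"
    then obtain z where "z \<in> T" "norm z < N T + e" using N_less by blast
    moreover have "N T \<le> d" unfolding d_def using \<open>T \<in> \<T>\<close> bdd_N by (intro cSup_upper) auto
    ultimately show "\<exists>z\<in>T. norm z < d + e" by (intro bexI[of _ z]) auto
  next
    fix e :: real assume "0 < e"
    then obtain T where "T \<in> \<T>" "d - e < N T"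
      using \<open>\<T> \<noteq> {}\<close> less_cSup_iff[OF _ bdd_N, of "d - e"] unfolding d_def by auto
    moreover have "d - e \<le> norm z" if "z \<in> T" for z using N_le[OF that] \<open>d - e < N T\<close> by linarith
    ultimately show "\<exists>T\<in>\<T>. \<forall>z\<in>T. d - e \<le> norm z" by blast
  qed
qed

lemma directed_convex_approximating_sequenceE:
  fixes \<T> :: "'a::real_inner set set"
  assumes "\<T> \<noteq> {}" and "bounded (\<Union>\<T>)" and convex_ne: "\<And>T. T \<in> \<T> \<Longrightarrow> convex T \<and> T \<noteq> {}"
    and directed: "\<And>S T. S \<in> \<T> \<Longrightarrow> T \<in> \<T> \<Longrightarrow> \<exists>U\<in>\<T>. U \<subseteq> S \<inter> T"
  obtains x :: "nat \<Rightarrow> 'a" and \<epsilon> where "\<epsilon> \<longlonglongrightarrow> 0"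
    and "\<And>T m n. T \<in> \<T> \<Longrightarrow> \<exists>z\<in>T. dist z (x m) \<le> \<epsilon> m \<and> dist z (x n) \<le> \<epsilon> n"
proof -
  obtain d where small: "\<And>T e. T \<in> \<T> \<Longrightarrow> 0 < e \<Longrightarrow> \<exists>z\<in>T. norm z < d + e"
    and large: "\<And>e. 0 < e \<Longrightarrow> \<exists>T\<in>\<T>. \<forall>z\<in>T. d - e \<le> norm z"
    using sup_inf_normE[OF assms(1,2)] convex_ne by blast
  define \<delta> where "\<delta> n = inverse (real (Suc n))" for n
  have \<delta>: "0 < \<delta> n" for n by (simp add: \<delta>_def)
  obtain S where S: "\<And>n. S n \<in> \<T>" and lower: "\<And>n z. z \<in> S n \<Longrightarrow> d - \<delta> n \<le> norm z"
    using large[OF \<delta>] by metis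
  have "\<forall>n. \<exists>z\<in>S n. norm z < d + \<delta> n" using small[OF S \<delta>] by blast
  then obtain x where x: "\<And>n. x n \<in> S n" "\<And>n. norm (x n) < d + \<delta> n" by metis
  define \<epsilon> where "\<epsilon> n = sqrt (16 * \<delta> n * (d + \<delta> n))" for n
  have near: "dist z (x n) \<le> \<epsilon> n" if "z \<in> S n" "norm z \<le> d + \<delta> n" for z n
  proof -
    have "(norm (z - x n))\<^sup>2 \<le> 16 * \<delta> n * (d + \<delta> n)"
      using convex_ne[OF S] that x[of n] lower \<delta>[of n]
      by (intro convex_near_minimal_norm_diff[of "S n"]) auto
    then show ?thesis unfolding \<epsilon>_def dist_norm by (rule real_le_rsqrt)
  qed
  show ?thesis
  proof (rule that)
    have "\<delta> \<longlonglongrightarrow> 0" unfolding \<delta>_def by (rule LIMSEQ_inverse_real_of_nat)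
    then have "\<epsilon> \<longlonglongrightarrow> sqrt (16 * 0 * (d + 0))" unfolding \<epsilon>_def by (intro tendsto_intros)
    then show "\<epsilon> \<longlonglongrightarrow> 0" by simp
  next
    fix T m n assume "T \<in> \<T>"
    obtain U where "U \<in> \<T>" "U \<subseteq> S m \<inter> S n" using directed[OF S S] by blast
    then obtain U' where "U' \<in> \<T>" "U' \<subseteq> T \<inter> S m \<inter> S n" using directed[OF \<open>T \<in> \<T>\<close>] by blast
    moreover obtain z where "z \<in> U'" "norm z < d + min (\<delta> m) (\<delta> n)"
      using small[OF \<open>U' \<in> \<T>\<close>, of "min (\<delta> m) (\<delta> n)"] \<delta> by auto
    ultimately have "z \<in> T" "dist z (x m) \<le> \<epsilon> m" "dist z (x n) \<le> \<epsilon> n"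
      using near[of z m] near[of z n] by auto
    then show "\<exists>z\<in>T. dist z (x m) \<le> \<epsilon> m \<and> dist z (x n) \<le> \<epsilon> n" by blast
  qed
qed

text \<open>A substitute for the weak compactness of bounded closed convex sets.\<close>

lemma closed_convex_fip_Inter_nonempty:
  fixes \<K> :: "'a::{real_inner,complete_space} set set"
  assumes closed_convex: "\<And>K. K \<in> \<K> \<Longrightarrow> closed K \<and> convex K"
    and "K\<^sub>0 \<in> \<K>" "bounded K\<^sub>0"
    and fip: "\<And>\<F>. finite \<F> \<Longrightarrow> \<F> \<subseteq> \<K> \<Longrightarrow> \<Inter>(insert K\<^sub>0 \<F>) \<noteq> {}"
  shows "\<Inter>\<K> \<noteq> {}"
proof -
  define \<T> where "\<T> = (\<lambda>\<F>. \<Inter>(insert K\<^sub>0 \<F>)) ` {\<F>. finite \<F> \<and> \<F> \<subseteq> \<K>}"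
  have "\<T> \<noteq> {}" unfolding \<T>_def by blast
  moreover have "\<Union>\<T> \<subseteq> K\<^sub>0" unfolding \<T>_def by blast
  then have "bounded (\<Union>\<T>)" using \<open>bounded K\<^sub>0\<close> by (rule bounded_subset[rotated])
  moreover have closed_convex_\<T>: "closed T \<and> convex T \<and> T \<noteq> {}" if "T \<in> \<T>" for T
  proof -
    obtain \<F> where "finite \<F>" "\<F> \<subseteq> \<K>" and T: "T = \<Inter>(insert K\<^sub>0 \<F>)"
      using \<open>T \<in> \<T>\<close> unfolding \<T>_def by blast
    then have "T \<noteq> {}" using fip by blast
    moreover have "closed T" unfolding T
      using closed_convex \<open>K\<^sub>0 \<in> \<K>\<close> \<open>\<F> \<subseteq> \<K>\<close> by (intro closed_Inter ballI) auto
    moreover have "convex T" unfolding T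
      using closed_convex \<open>K\<^sub>0 \<in> \<K>\<close> \<open>\<F> \<subseteq> \<K>\<close> by (intro convex_Inter) auto
    ultimately show ?thesis by blast
  qed
  moreover have "\<exists>U\<in>\<T>. U \<subseteq> S \<inter> T" if "S \<in> \<T>" "T \<in> \<T>" for S T
  proof -
    obtain \<F> \<F>' where "finite \<F>" "\<F> \<subseteq> \<K>" "S = \<Inter>(insert K\<^sub>0 \<F>)"
      and "finite \<F>'" "\<F>' \<subseteq> \<K>" "T = \<Inter>(insert K\<^sub>0 \<F>')"
      using \<open>S \<in> \<T>\<close> \<open>T \<in> \<T>\<close> unfolding \<T>_def by blast
    then have "\<Inter>(insert K\<^sub>0 (\<F> \<union> \<F>')) \<in> \<T>" "\<Inter>(insert K\<^sub>0 (\<F> \<union> \<F>')) \<subseteq> S \<inter> T"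
      unfolding \<T>_def by auto
    then show ?thesis by blast
  qed
  ultimately obtain x :: "nat \<Rightarrow> 'a" and \<epsilon> where "\<epsilon> \<longlonglongrightarrow> 0"
    and "\<And>T m n. T \<in> \<T> \<Longrightarrow> \<exists>z\<in>T. dist z (x m) \<le> \<epsilon> m \<and> dist z (x n) \<le> \<epsilon> n"
    by (elim directed_convex_approximating_sequenceE) auto
  then have "\<Inter>\<T> \<noteq> {}"
    using closed_convex_\<T> \<open>\<T> \<noteq> {}\<close>
    by (intro closed_Inter_nonempty_by_approximation[of \<T> \<epsilon> x]) auto
  moreover have "\<Inter>\<T> \<subseteq> \<Inter>\<K>"
  proof
    fix z assume "z \<in> \<Inter>\<T>"
    show "z \<in> \<Inter>\<K>"
    proof
      fix K assume "K \<in> \<K>"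
      then have "\<Inter>(insert K\<^sub>0 {K}) \<in> \<T>" unfolding \<T>_def by blast
      then show "z \<in> K" using \<open>z \<in> \<Inter>\<T>\<close> by blast
    qed
  qed
  ultimately show ?thesis by blast
qed

section \<open>The Debrunner-Flor lemma\<close>

lemma inner_diff_diff_eq:
  fixes x a b :: "'a::real_inner"
  shows "inner (x - a) (x - b) = (norm (x - midpoint a b))\<^sup>2 - (dist a b / 2)\<^sup>2"
  unfolding power2_norm_eq_inner midpoint_def dist_norm power_divide
  by (simp add: inner_diff_left inner_diff_right inner_add_left inner_add_right inner_commute
      algebra_simps) (simp add: field_simps)

lemma cball_midpoint_eq:
  fixes a b :: "'a::real_inner"
  shows "cball (midpoint a b) (dist a b / 2) = {x. inner (x - a) (x - b) \<le> 0}"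
  by (auto simp: inner_diff_diff_eq dist_norm norm_minus_commute abs_le_square_iff
      simp flip: abs_le_square_iff)

lemma continuous_on_Max:
  fixes f :: "'i \<Rightarrow> 'a::topological_space \<Rightarrow> 'b::linorder_topology"
  assumes "finite I" "I \<noteq> {}" "\<And>i. i \<in> I \<Longrightarrow> continuous_on S (f i)"
  shows "continuous_on S (\<lambda>x. MAX i\<in>I. f i x)"
  using assms
proof (induction I rule: finite_ne_induct)
  case (insert i I)
  then show ?case by (simp add: continuous_on_max)
qed simp

lemma compact_convex_descentE:
  fixes K :: "'a::real_inner set"
  assumes "compact K" "convex K" "K \<noteq> {}" "x \<notin> K"
  obtains p where "p \<in> K"
    and "\<And>c t. c \<in> K \<Longrightarrow> 0 < t \<Longrightarrow> t \<le> 1 \<Longrightarrow> norm (x + t *\<^sub>R (p - x) - c) < norm (x - c)"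
proof -
  have "continuous_on K (dist x)" by (intro continuous_intros)
  then obtain p where "p \<in> K" and closest: "\<forall>z\<in>K. dist x p \<le> dist x z"
    using continuous_attains_inf[OF \<open>compact K\<close> \<open>K \<noteq> {}\<close>] by blast
  define d where "d = p - x"
  have "0 < inner d d" using \<open>p \<in> K\<close> \<open>x \<notin> K\<close> by (auto simp: d_def)
  have "norm (x + t *\<^sub>R d - c) < norm (x - c)" if "c \<in> K" "0 < t" "t \<le> 1" for c t
  proof -
    have "inner (x - p) (c - p) \<le> 0"
      using assms(1,2) \<open>p \<in> K\<close> \<open>c \<in> K\<close> closest
      by (intro any_closest_point_dot) (auto intro: compact_imp_closed)
    then have "inner d (x - c) \<le> - inner d d"
      unfolding d_def by (simp add: inner_diff_left inner_diff_right inner_commute algebra_simps)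
    then have "2 * t * inner d (x - c) \<le> 2 * t * (- inner d d)"
      using \<open>0 < t\<close> by (intro mult_left_mono) auto
    moreover have "t\<^sup>2 * inner d d < 2 * t * inner d d"
      using \<open>0 < inner d d\<close> \<open>0 < t\<close> \<open>t \<le> 1\<close>
      by (intro mult_strict_right_mono) (auto simp: power2_eq_square)
    moreover have "(norm (x + t *\<^sub>R d - c))\<^sup>2
        = (norm (x - c))\<^sup>2 + 2 * t * inner d (x - c) + t\<^sup>2 * inner d d"
      unfolding power2_norm_eq_inner
      by (simp add: power2_eq_square inner_diff_left inner_diff_right inner_add_left inner_add_right
          inner_commute algebra_simps)
    ultimately have "(norm (x + t *\<^sub>R d - c))\<^sup>2 < (norm (x - c))\<^sup>2" by linarith
    then show ?thesis by (rule power_less_imp_less_base) simp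
  qed
  then show ?thesis using that \<open>p \<in> K\<close> by (simp add: d_def)
qed

lemma Max_sq_dist_minimizer_in_active_hull:
  fixes c :: "'i \<Rightarrow> 'a::real_inner" and f :: "'i \<Rightarrow> 'a \<Rightarrow> real"
  assumes "finite I" and f: "\<And>i z. f i z = (norm (z - c i))\<^sup>2 - r i"
    and x: "x \<in> convex hull (c ` I)"
    and min: "\<And>z. z \<in> convex hull (c ` I) \<Longrightarrow> (MAX i\<in>I. f i x) \<le> (MAX i\<in>I. f i z)"
  shows "x \<in> convex hull (c ` {i\<in>I. f i x = (MAX i\<in>I. f i x)})"
proof (rule ccontr)
  define m where "m = (MAX i\<in>I. f i x)"
  define J where "J = {i\<in>I. f i x = m}"
  define K where "K = convex hull (c ` J)"
  assume "x \<notin> convex hull (c ` {i\<in>I. f i x = (MAX i\<in>I. f i x)})"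
  then have "x \<notin> K" by (simp add: K_def J_def m_def)
  have "I \<noteq> {}" using x by auto
  then have "m \<in> (\<lambda>i. f i x) ` I" unfolding m_def using \<open>finite I\<close> by (intro Max_in) auto
  then have "J \<noteq> {}" by (auto simp: J_def)
  have le_m: "f i x \<le> m" if "i \<in> I" for i using \<open>finite I\<close> that by (simp add: m_def)
  have K: "compact K" "convex K" "K \<noteq> {}"
    using \<open>finite I\<close> \<open>J \<noteq> {}\<close> by (auto simp: K_def J_def finite_imp_compact_convex_hull)
  obtain p where "p \<in> K"
    and closer: "\<And>c t. c \<in> K \<Longrightarrow> 0 < t \<Longrightarrow> t \<le> 1 \<Longrightarrow> norm (x + t *\<^sub>R (p - x) - c) < norm (x - c)"
    using compact_convex_descentE[OF K \<open>x \<notin> K\<close>] by blast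
  define y where "y t = x + t *\<^sub>R (p - x)" for t
  have active: "f i (y t) < m" if "i \<in> J" "0 < t" "t \<le> 1" for i t
  proof -
    have "c i \<in> K" using \<open>i \<in> J\<close> by (simp add: K_def hull_inc)
    then have "norm (y t - c i) < norm (x - c i)" unfolding y_def using closer that(2,3) by blast
    then have "f i (y t) < f i x" unfolding f by (simp add: power_strict_mono)
    then show ?thesis using \<open>i \<in> J\<close> by (simp add: J_def)
  qed
  have "\<forall>\<^sub>F t in at_right 0. f i (y t) < m" if "i \<in> I - J" for i
  proof -
    have "(y \<longlongrightarrow> x) (at_right 0)" unfolding y_def by (auto intro!: tendsto_eq_intros)
    then have "((\<lambda>t. f i (y t)) \<longlongrightarrow> f i x) (at_right 0)" unfolding f by (intro tendsto_intros)
    moreover have "f i x < m" using that le_m by (force simp: J_def)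
    ultimately show ?thesis by (rule order_tendstoD)
  qed
  then have "\<forall>\<^sub>F t in at_right 0. t \<in> {0<..<1} \<and> (\<forall>i\<in>I - J. f i (y t) < m)"
    using \<open>finite I\<close> by (intro eventually_conj eventually_at_right_real eventually_ball_finite) auto
  then obtain t where t: "0 < t" "t < 1" "\<forall>i\<in>I - J. f i (y t) < m"
    using eventually_happens[of _ "at_right (0::real)"] by auto
  have "(MAX i\<in>I. f i (y t)) < m"
    using \<open>finite I\<close> \<open>I \<noteq> {}\<close> t active by (auto simp: J_def)
  moreover have "y t \<in> convex hull (c ` I)"
  proof -
    have "K \<subseteq> convex hull (c ` I)" unfolding K_def J_def by (intro hull_mono image_mono) auto
    then have "p \<in> convex hull (c ` I)" using \<open>p \<in> K\<close> by blast
    then show ?thesis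
      unfolding y_def using convexD_alt[OF convex_convex_hull x, of p t] t by (simp add: algebra_simps)
  qed
  ultimately show False using min unfolding m_def by fastforce
qed

lemma convex_hull_image_finite_sumE:
  fixes c :: "'i \<Rightarrow> 'a::real_vector"
  assumes "finite I" "x \<in> convex hull (c ` I)"
  obtains \<mu> where "\<forall>i\<in>I. 0 \<le> \<mu> i" "sum \<mu> I = 1" "x = (\<Sum>i\<in>I. \<mu> i *\<^sub>R c i)"
proof -
  have "x \<in> convex hull (\<Union>i\<in>I. {c i})" using assms(2) by (simp add: UNION_singleton_eq_range)
  then obtain \<mu> s where "\<forall>i\<in>I. 0 \<le> \<mu> i" "sum \<mu> I = 1" "\<forall>i\<in>I. s i \<in> {c i}"
      "x = (\<Sum>i\<in>I. \<mu> i *\<^sub>R s i)"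
    unfolding convex_hull_finite_union[OF \<open>finite I\<close>, of "\<lambda>i. {c i}", simplified] by blast
  moreover have "(\<Sum>i\<in>I. \<mu> i *\<^sub>R s i) = (\<Sum>i\<in>I. \<mu> i *\<^sub>R c i)"
    using \<open>\<forall>i\<in>I. s i \<in> {c i}\<close> by (intro sum.cong) auto
  ultimately show ?thesis using that by simp
qed

lemma sum_sum_inner_diff_eq:
  fixes a b :: "'i \<Rightarrow> 'a::real_inner"
  assumes "sum \<mu> I = 1"
  shows "(\<Sum>i\<in>I. \<Sum>j\<in>I. \<mu> i * \<mu> j * inner (a i - a j) (b i - b j))
    = 2 * (\<Sum>i\<in>I. \<mu> i * inner (a i) (b i))
      - 2 * inner (\<Sum>i\<in>I. \<mu> i *\<^sub>R a i) (\<Sum>i\<in>I. \<mu> i *\<^sub>R b i)"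
proof -
  define S where "S = (\<Sum>i\<in>I. \<mu> i * inner (a i) (b i))"
  have diag_left: "(\<Sum>i\<in>I. \<Sum>j\<in>I. \<mu> i * \<mu> j * inner (a i) (b i)) = S"
    unfolding S_def
    by (simp add: sum_distrib_right[symmetric] sum_distrib_left[symmetric] assms mult.commute
        mult.left_commute)
  have diag_right: "(\<Sum>i\<in>I. \<Sum>j\<in>I. \<mu> i * \<mu> j * inner (a j) (b j)) = S"
    unfolding S_def
    by (simp add: sum_distrib_left[symmetric] sum_distrib_right[symmetric] assms mult.assoc)
  have cross: "(\<Sum>i\<in>I. \<Sum>j\<in>I. \<mu> i * \<mu> j * inner (a j) (b i))
      = inner (\<Sum>i\<in>I. \<mu> i *\<^sub>R a i) (\<Sum>i\<in>I. \<mu> i *\<^sub>R b i)"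
    by (simp add: inner_sum_left inner_sum_right sum_distrib_left mult.assoc)
  have cross': "(\<Sum>i\<in>I. \<Sum>j\<in>I. \<mu> i * \<mu> j * inner (a i) (b j))
      = inner (\<Sum>i\<in>I. \<mu> i *\<^sub>R a i) (\<Sum>i\<in>I. \<mu> i *\<^sub>R b i)"
  proof -
    have "(\<Sum>i\<in>I. \<Sum>j\<in>I. \<mu> i * \<mu> j * inner (a i) (b j))
        = (\<Sum>j\<in>I. \<Sum>i\<in>I. \<mu> i * \<mu> j * inner (a i) (b j))"
      by (rule sum.swap)
    also have "\<dots> = (\<Sum>i\<in>I. \<Sum>j\<in>I. \<mu> i * \<mu> j * inner (a j) (b i))"
      by (simp add: ac_simps)
    finally show ?thesis using cross by simp
  qed
  have "(\<Sum>i\<in>I. \<Sum>j\<in>I. \<mu> i * \<mu> j * inner (a i - a j) (b i - b j))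
    = (\<Sum>i\<in>I. \<Sum>j\<in>I. \<mu> i * \<mu> j * inner (a i) (b i) - \<mu> i * \<mu> j * inner (a i) (b j)
        - \<mu> i * \<mu> j * inner (a j) (b i) + \<mu> i * \<mu> j * inner (a j) (b j))"
    by (simp add: inner_diff_left inner_diff_right algebra_simps)
  also have "\<dots> = 2 * S - 2 * inner (\<Sum>i\<in>I. \<mu> i *\<^sub>R a i) (\<Sum>i\<in>I. \<mu> i *\<^sub>R b i)"
    using diag_left diag_right cross cross' by (simp add: sum.distrib sum_subtractf)
  finally show ?thesis unfolding S_def .
qed

lemma monotone_family_convex_combination_le:
  fixes y v :: "'i \<Rightarrow> 'a::real_inner"
  assumes "\<forall>i\<in>I. 0 \<le> \<mu> i" "sum \<mu> I = 1"
    and mono: "\<And>i j. i \<in> I \<Longrightarrow> j \<in> I \<Longrightarrow> 0 \<le> inner (y i - y j) (v i - v j)"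
    and x: "x = (\<Sum>i\<in>I. \<mu> i *\<^sub>R midpoint (y i) (- v i))"
  shows "(\<Sum>i\<in>I. \<mu> i * inner (x - y i) (x + v i)) \<le> 0"
proof -
  define Y where "Y = (\<Sum>i\<in>I. \<mu> i *\<^sub>R y i)"
  define V where "V = (\<Sum>i\<in>I. \<mu> i *\<^sub>R v i)"
  define S where "S = (\<Sum>i\<in>I. \<mu> i * inner (y i) (v i))"
  have "x = inverse 2 *\<^sub>R (\<Sum>i\<in>I. \<mu> i *\<^sub>R y i - \<mu> i *\<^sub>R v i)"
    unfolding x midpoint_def by (simp add: scaleR_sum_right algebra_simps)
  then have x_eq: "x = inverse 2 *\<^sub>R (Y - V)" by (simp add: Y_def V_def sum_subtractf)
  have "(\<Sum>i\<in>I. \<mu> i * inner (x - y i) (x + v i))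
      = (\<Sum>i\<in>I. \<mu> i * inner x x + \<mu> i * inner x (v i)
          - \<mu> i * inner (y i) x - \<mu> i * inner (y i) (v i))"
    by (intro sum.cong) (auto simp: inner_diff_left inner_add_right algebra_simps)
  also have "\<dots> = inner x x + inner x V - inner Y x - S"
    unfolding Y_def V_def S_def
    by (simp add: sum_subtractf sum.distrib sum_distrib_right[symmetric] inner_sum_left
        inner_sum_right \<open>sum \<mu> I = 1\<close> mult.commute)
  also have "\<dots> = - inner Y Y / 4 + inner Y V / 2 - inner V V / 4 - S"
    unfolding x_eq by (simp add: inner_diff_left inner_diff_right inner_commute algebra_simps)
  finally have sum_eq: "(\<Sum>i\<in>I. \<mu> i * inner (x - y i) (x + v i))
      = - inner Y Y / 4 + inner Y V / 2 - inner V V / 4 - S" .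
  have "0 \<le> (\<Sum>i\<in>I. \<Sum>j\<in>I. \<mu> i * \<mu> j * inner (y i - y j) (v i - v j))"
    using assms(1) mono by (intro sum_nonneg) auto
  then have "inner Y V \<le> S"
    unfolding sum_sum_inner_diff_eq[OF \<open>sum \<mu> I = 1\<close>] Y_def V_def S_def by simp
  moreover have "0 \<le> inner Y Y + 2 * inner Y V + inner V V"
    using inner_ge_zero[of "Y + V"] by (simp add: inner_add_left inner_add_right inner_commute)
  ultimately show ?thesis unfolding sum_eq by linarith
qed

lemma monotone_family_common_point:
  fixes y v :: "'i \<Rightarrow> 'a::real_inner"
  assumes "finite I" and mono: "\<And>i j. i \<in> I \<Longrightarrow> j \<in> I \<Longrightarrow> 0 \<le> inner (y i - y j) (v i - v j)"
  shows "\<exists>x. \<forall>i\<in>I. inner (x - y i) (x + v i) \<le> 0"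
proof (cases "I = {}")
  case False
  define c where "c i = midpoint (y i) (- v i)" for i
  define f where "f i z = inner (z - y i) (z + v i)" for i z
  have f_eq: "f i z = (norm (z - c i))\<^sup>2 - (dist (y i) (- v i) / 2)\<^sup>2" for i z
    using inner_diff_diff_eq[of z "y i" "- v i"] by (simp add: f_def c_def)
  define C where "C = convex hull (c ` I)"
  have "compact C" "C \<noteq> {}"
    using \<open>finite I\<close> False by (auto simp: C_def finite_imp_compact_convex_hull)
  moreover have "continuous_on C (\<lambda>z. MAX i\<in>I. f i z)"
    using \<open>finite I\<close> False by (intro continuous_on_Max) (auto simp: f_def intro!: continuous_intros)
  ultimately obtain x where "x \<in> C" and min: "\<forall>z\<in>C. (MAX i\<in>I. f i x) \<le> (MAX i\<in>I. f i z)"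
    using continuous_attains_inf by blast
  define m where "m = (MAX i\<in>I. f i x)"
  define J where "J = {i\<in>I. f i x = m}"
  have "x \<in> convex hull (c ` J)"
    unfolding J_def m_def using \<open>finite I\<close> f_eq \<open>x \<in> C\<close> min unfolding C_def
    by (intro Max_sq_dist_minimizer_in_active_hull[of I f c]) auto
  moreover have "finite J" using \<open>finite I\<close> by (simp add: J_def)
  ultimately obtain \<mu> where \<mu>: "\<forall>i\<in>J. 0 \<le> \<mu> i" "sum \<mu> J = 1" "x = (\<Sum>i\<in>J. \<mu> i *\<^sub>R c i)"
    by (elim convex_hull_image_finite_sumE)
  have "(\<Sum>i\<in>J. \<mu> i * f i x) = (\<Sum>i\<in>J. \<mu> i * m)" by (intro sum.cong) (auto simp: J_def)
  also have "\<dots> = m" using \<mu>(2) by (simp flip: sum_distrib_right)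
  finally have "m = (\<Sum>i\<in>J. \<mu> i * f i x)" ..
  also have "\<dots> \<le> 0"
    unfolding f_def
  proof (rule monotone_family_convex_combination_le[OF \<mu>(1,2)])
    show "0 \<le> inner (y i - y j) (v i - v j)" if "i \<in> J" "j \<in> J" for i j
      using mono that by (simp add: J_def)
    show "x = (\<Sum>i\<in>J. \<mu> i *\<^sub>R midpoint (y i) (- v i))" using \<mu>(3) by (simp add: c_def)
  qed
  finally have "m \<le> 0" .
  moreover have "f i x \<le> m" if "i \<in> I" for i using \<open>finite I\<close> that by (simp add: m_def)
  ultimately show ?thesis unfolding f_def by (meson order_trans)
qed simp

lemma monotone_graph_common_point:
  fixes G :: "('a::{real_inner,complete_space} \<times> 'a) set"
  assumes mono: "\<And>y u z v. (y, u) \<in> G \<Longrightarrow> (z, v) \<in> G \<Longrightarrow> 0 \<le> inner (y - z) (u - v)"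
  shows "\<exists>x. \<forall>(y, v)\<in>G. inner (x - y) (x + v) \<le> 0"
proof (cases "G = {}")
  case False
  then obtain g\<^sub>0 where "g\<^sub>0 \<in> G" by blast
  define B where "B g = {x. inner (x - fst g) (x + snd g) \<le> 0}" for g :: "'a \<times> 'a"
  have B_cball: "B g = cball (midpoint (fst g) (- snd g)) (dist (fst g) (- snd g) / 2)" for g
    by (simp add: B_def cball_midpoint_eq)
  have "\<Inter>(B ` G) \<noteq> {}"
  proof (rule closed_convex_fip_Inter_nonempty)
    show "closed K \<and> convex K" if "K \<in> B ` G" for K using that by (auto simp: B_cball)
    show "B g\<^sub>0 \<in> B ` G" "bounded (B g\<^sub>0)" using \<open>g\<^sub>0 \<in> G\<close> by (auto simp: B_cball)
    show "\<Inter>(insert (B g\<^sub>0) \<F>) \<noteq> {}" if "finite \<F>" "\<F> \<subseteq> B ` G" for \<F>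
    proof -
      obtain F where F: "F \<subseteq> G" "finite F" "\<F> = B ` F"
        using \<open>finite \<F>\<close> \<open>\<F> \<subseteq> B ` G\<close> by (auto dest: finite_subset_image)
      have "0 \<le> inner (fst g - fst h) (snd g - snd h)" if "g \<in> insert g\<^sub>0 F" "h \<in> insert g\<^sub>0 F" for g h
        using mono[of "fst g" "snd g" "fst h" "snd h"] that F(1) \<open>g\<^sub>0 \<in> G\<close> by auto
      then obtain x where "\<forall>g\<in>insert g\<^sub>0 F. inner (x - fst g) (x + snd g) \<le> 0"
        using monotone_family_common_point[of "insert g\<^sub>0 F" fst snd] F(2) by blast
      then have "x \<in> \<Inter>(insert (B g\<^sub>0) \<F>)" unfolding F(3) B_def by blast
      then show ?thesis by blast
    qed
  qed
  then obtain x where "\<forall>g\<in>G. x \<in> B g" by blast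
  then have "\<forall>(y, v)\<in>G. inner (x - y) (x + v) \<le> 0" by (auto simp: B_def)
  then show ?thesis by blast
qed simp

section \<open>Resolvents of maximal monotone operators\<close>

lemma maximal_monotone_memI:
  assumes "maximal_monotone A" and related: "\<And>y v. v \<in> A y \<Longrightarrow> 0 \<le> inner (x - y) (u - v)"
  shows "u \<in> A x"
proof -
  have monA: "monotone_op A" using assms(1) by (simp add: maximal_monotone_def)
  define B where "B = A(x := insert u (A x))"
  have "0 \<le> inner (a - b) (w - w')" if wa: "w \<in> B a" and wb: "w' \<in> B b" for a b w w'
  proof -
    consider "w \<in> A a" "w' \<in> A b" | "a = x" "w = u" "w' \<in> A b" | "w \<in> A a" "b = x" "w' = u"
      | "a = x" "w = u" "b = x" "w' = u"
      using wa wb by (auto simp: B_def split: if_splits)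
    then show ?thesis
    proof cases
      case 1
      then show ?thesis using monA by (simp add: monotone_op_def)
    next
      case 2
      then show ?thesis using related by simp
    next
      case 3
      then have "0 \<le> inner (x - a) (u - w)" using related by simp
      then show ?thesis using \<open>b = x\<close> \<open>w' = u\<close>
        by (simp add: inner_diff_left inner_diff_right inner_commute)
    qed simp
  qed
  then have "monotone_op B" by (simp add: monotone_op_def)
  moreover have "\<forall>y. A y \<subseteq> B y" by (simp add: B_def subset_insertI)
  ultimately have "B = A" using assms(1) by (simp add: maximal_monotone_def)
  then show ?thesis by (metis B_def fun_upd_same insertI1)
qed

lemma maximal_monotone_Minty:
  fixes A :: "'a::{real_inner,complete_space} \<Rightarrow> 'a set"
  assumes "maximal_monotone A" and "0 < lam"
  shows "\<exists>y. \<exists>u\<in>A y. z = y + lam *\<^sub>R u"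
proof -
  have monA: "monotone_op A" using assms(1) by (simp add: maximal_monotone_def)
  define G where "G = {(y - z, lam *\<^sub>R u) | y u. u \<in> A y}"
  have "0 \<le> inner (y' - z') (u' - v')" if g: "(y', u') \<in> G" and h: "(z', v') \<in> G" for y' u' z' v'
  proof -
    obtain y u w v where "y' = y - z" "u' = lam *\<^sub>R u" "u \<in> A y"
      and "z' = w - z" "v' = lam *\<^sub>R v" "v \<in> A w"
      using g h by (auto simp: G_def)
    moreover have "0 \<le> inner (y - w) (u - v)" using monA \<open>u \<in> A y\<close> \<open>v \<in> A w\<close>
      by (simp add: monotone_op_def)
    ultimately show ?thesis using \<open>0 < lam\<close> by (simp flip: scaleR_diff_right)
  qed
  then obtain x' where x': "\<forall>(y', v)\<in>G. inner (x' - y') (x' + v) \<le> 0"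
    using monotone_graph_common_point by blast
  define x where "x = x' + z"
  define w where "w = inverse lam *\<^sub>R (z - x)"
  have "w \<in> A x"
  proof (rule maximal_monotone_memI[OF assms(1)])
    fix y u assume "u \<in> A y"
    then have "(y - z, lam *\<^sub>R u) \<in> G" by (auto simp: G_def)
    then have "inner (x - y) (- lam *\<^sub>R (w - u)) \<le> 0"
      using x' \<open>0 < lam\<close> by (auto simp: x_def w_def algebra_simps)
    then show "0 \<le> inner (x - y) (w - u)" using \<open>0 < lam\<close> by (simp add: zero_le_mult_iff)
  qed
  moreover have "z = x + lam *\<^sub>R w" using \<open>0 < lam\<close> by (simp add: w_def)
  ultimately show ?thesis by blast
qed

lemma resolvent_eqI:
  assumes "monotone_op A" "0 < lam" "u \<in> A y" "z = y + lam *\<^sub>R u"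
  shows "resolvent A lam z = y"
  unfolding resolvent_def
proof (rule the_equality)
  show "\<exists>u\<in>A y. z = y + lam *\<^sub>R u" using assms(3,4) by blast
next
  fix y' assume "\<exists>u'\<in>A y'. z = y' + lam *\<^sub>R u'"
  then obtain u' where "u' \<in> A y'" "z = y' + lam *\<^sub>R u'" by blast
  then have y': "y' - y = lam *\<^sub>R (u - u')" using assms(4) by (simp add: algebra_simps)
  have "0 \<le> inner (y' - y) (u' - u)"
    using assms(1) \<open>u' \<in> A y'\<close> assms(3) by (simp add: monotone_op_def)
  then have "0 \<le> inner (lam *\<^sub>R (u - u')) (- (u - u'))" unfolding y' by simp
  then have "lam * inner (u - u') (u - u') \<le> 0"
    by (simp only: inner_scaleR_left inner_minus_right)
  then have "inner (u - u') (u - u') \<le> 0" using \<open>0 < lam\<close> by (simp add: mult_le_0_iff)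
  then have "u' = u" by (metis inner_gt_zero_iff not_le right_minus_eq)
  then show "y' = y" using \<open>y' - y = lam *\<^sub>R (u - u')\<close> by simp
qed

lemma resolventE:
  fixes A :: "'a::{real_inner,complete_space} \<Rightarrow> 'a set"
  assumes "maximal_monotone A" "0 < lam"
  obtains u where "u \<in> A (resolvent A lam z)" "z = resolvent A lam z + lam *\<^sub>R u"
proof -
  obtain y u where "u \<in> A y" "z = y + lam *\<^sub>R u" using maximal_monotone_Minty[OF assms] by blast
  moreover have "resolvent A lam z = y"
    using assms calculation by (intro resolvent_eqI) (auto simp: maximal_monotone_def)
  ultimately show ?thesis using that by simp
qed

lemma resolvent_eq_self_iff:
  fixes A :: "'a::{real_inner,complete_space} \<Rightarrow> 'a set"
  assumes "maximal_monotone A" "0 < lam"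
  shows "resolvent A lam x = x \<longleftrightarrow> 0 \<in> A x"
proof
  assume "resolvent A lam x = x"
  moreover obtain u where "u \<in> A (resolvent A lam x)" "x = resolvent A lam x + lam *\<^sub>R u"
    using resolventE[OF assms] by blast
  ultimately show "0 \<in> A x"
    using \<open>0 < lam\<close> by (metis add_cancel_left_right scaleR_eq_0_iff less_irrefl)
next
  assume "0 \<in> A x"
  then show "resolvent A lam x = x"
    using assms by (intro resolvent_eqI[of A lam 0]) (auto simp: maximal_monotone_def)
qed

lemma monotone_op_resolvent_step_norms:
  assumes "monotone_op A" "0 < lam1" "lam1 \<le> lam2" "u1 \<in> A y1" "u2 \<in> A y2"
    and eq: "y1 + lam1 *\<^sub>R u1 = y2 + lam2 *\<^sub>R u2"
  shows "norm u2 \<le> norm u1" and "lam1 * norm u1 \<le> lam2 * norm u2"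
proof -
  define a where "a = norm u1"
  define b where "b = norm u2"
  have "0 \<le> inner (y1 - y2) (u1 - u2)" using assms(1,4,5) by (simp add: monotone_op_def)
  also have "y1 - y2 = lam2 *\<^sub>R u2 - lam1 *\<^sub>R u1" using eq by (simp add: algebra_simps)
  finally have "lam2 * inner u2 u2 + lam1 * inner u1 u1 \<le> (lam1 + lam2) * inner u1 u2"
    by (simp add: inner_diff_left inner_diff_right inner_commute algebra_simps)
  also have "\<dots> \<le> (lam1 + lam2) * (a * b)"
    using assms(2,3) norm_cauchy_schwarz[of u1 u2] by (simp add: a_def b_def)
  finally have prod: "(lam2 * b - lam1 * a) * (b - a) \<le> 0"
    by (simp add: a_def b_def power2_norm_eq_inner[symmetric] power2_eq_square algebra_simps)
  have lam_b: "lam1 * b \<le> lam2 * b" using assms(3) by (simp add: b_def mult_right_mono)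
  have "b \<le> a"
  proof (rule ccontr)
    assume "\<not> b \<le> a"
    then have "lam1 * a < lam1 * b" using \<open>0 < lam1\<close> by simp
    then show False using prod lam_b \<open>\<not> b \<le> a\<close> by (simp add: mult_le_0_iff)
  qed
  moreover have "lam1 * a \<le> lam2 * b"
  proof (rule ccontr)
    assume "\<not> lam1 * a \<le> lam2 * b"
    then have "lam1 * b < lam1 * a" using lam_b by linarith
    then have "b < a" using \<open>0 < lam1\<close> by simp
    then show False using prod \<open>\<not> lam1 * a \<le> lam2 * b\<close> by (simp add: mult_le_0_iff)
  qed
  ultimately show "norm u2 \<le> norm u1" "lam1 * norm u1 \<le> lam2 * norm u2"
    by (simp_all add: a_def b_def)
qed

lemma norm_resolvent_displacement_mono:
  fixes A :: "'a::{real_inner,complete_space} \<Rightarrow> 'a set"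
  assumes "maximal_monotone A" "0 < lam1" "lam1 \<le> lam2"
  shows "norm (x - resolvent A lam1 x) \<le> norm (x - resolvent A lam2 x)"
    and "lam1 * norm (x - resolvent A lam2 x) \<le> lam2 * norm (x - resolvent A lam1 x)"
proof -
  have "0 < lam2" using assms(2,3) by linarith
  obtain u1 where u1: "u1 \<in> A (resolvent A lam1 x)" "x = resolvent A lam1 x + lam1 *\<^sub>R u1"
    using resolventE[OF assms(1,2)] by blast
  obtain u2 where u2: "u2 \<in> A (resolvent A lam2 x)" "x = resolvent A lam2 x + lam2 *\<^sub>R u2"
    using resolventE[OF assms(1) \<open>0 < lam2\<close>] by blast
  have d1: "norm (x - resolvent A lam1 x) = lam1 * norm u1"
    using u1(2) \<open>0 < lam1\<close> by (metis add_diff_cancel_left' norm_scaleR abs_of_pos)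
  have d2: "norm (x - resolvent A lam2 x) = lam2 * norm u2"
    using u2(2) \<open>0 < lam2\<close> by (metis add_diff_cancel_left' norm_scaleR abs_of_pos)
  have "monotone_op A" using assms(1) by (simp add: maximal_monotone_def)
  moreover have "resolvent A lam1 x + lam1 *\<^sub>R u1 = resolvent A lam2 x + lam2 *\<^sub>R u2"
    using u1(2) u2(2) by simp
  ultimately have "norm u2 \<le> norm u1" "lam1 * norm u1 \<le> lam2 * norm u2"
    using monotone_op_resolvent_step_norms[OF _ assms(2,3) u1(1) u2(1)] by blast+
  then show "norm (x - resolvent A lam1 x) \<le> norm (x - resolvent A lam2 x)"
    and "lam1 * norm (x - resolvent A lam2 x) \<le> lam2 * norm (x - resolvent A lam1 x)"
    unfolding d1 d2 using \<open>0 < lam1\<close> \<open>0 < lam2\<close>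
    by (simp_all add: mult.left_commute[of lam1] mult_left_mono)
qed

lemma powr_scaling_bounds:
  fixes l1 l2 d1 d2 q :: real
  assumes "0 < l1" "l1 \<le> l2" "d1 \<le> d2" "l1 * d2 \<le> l2 * d1"
  shows "(l2 / l1) powr q * (l1 powr q * d1) \<le> l2 powr q * d2"
    and "l2 powr q * d2 \<le> (l2 / l1) powr (q + 1) * (l1 powr q * d1)"
proof -
  have "0 < l2" using assms(1,2) by linarith
  then have ratio: "(l2 / l1) powr q * l1 powr q = l2 powr q"
    using \<open>0 < l1\<close> by (simp add: powr_divide)
  then show "(l2 / l1) powr q * (l1 powr q * d1) \<le> l2 powr q * d2"
    using \<open>d1 \<le> d2\<close> by (simp add: mult.assoc[symmetric] mult_left_mono)
  have "d2 \<le> l2 / l1 * d1" using assms(1,4) by (simp add: field_simps)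
  then have "l2 powr q * d2 \<le> l2 powr q * (l2 / l1 * d1)" by (rule mult_left_mono) simp
  also have "(l2 / l1) powr (q + 1) = (l2 / l1) powr q * (l2 / l1)"
    using \<open>0 < l1\<close> \<open>0 < l2\<close> by (simp add: powr_add)
  then have "l2 powr q * (l2 / l1 * d1) = (l2 / l1) powr (q + 1) * (l1 powr q * d1)"
    by (simp flip: ratio)
  finally show "l2 powr q * d2 \<le> (l2 / l1) powr (q + 1) * (l1 powr q * d1)" .
qed

theorem lemma2p2:
  fixes A :: "'a::{real_inner, complete_space} \<Rightarrow> 'a set" and p :: nat
  assumes "maximal_monotone A" and "p \<ge> 2"
  shows "(\<forall>x lam1 lam2. 0 < lam1 \<and> lam1 \<le> lam2 \<longrightarrow>
            (lam2 / lam1) powr (1 / (real p - 1)) * phi A p lam1 x \<le> phi A p lam2 x \<and>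
            phi A p lam2 x \<le> (lam2 / lam1) powr (real p / (real p - 1)) * phi A p lam1 x)
       \<and> (\<forall>lam x. 0 < lam \<longrightarrow> (phi A p lam x = 0 \<longleftrightarrow> 0 \<in> A x))"
proof (intro conjI allI impI)
  fix x :: 'a and lam1 lam2 :: real
  assume lam: "0 < lam1 \<and> lam1 \<le> lam2"
  have "real p / (real p - 1) = 1 / (real p - 1) + 1" using assms(2) by (simp add: field_simps)
  then show "(lam2 / lam1) powr (1 / (real p - 1)) * phi A p lam1 x \<le> phi A p lam2 x"
    and "phi A p lam2 x \<le> (lam2 / lam1) powr (real p / (real p - 1)) * phi A p lam1 x"
    using powr_scaling_bounds[of lam1 lam2]
      norm_resolvent_displacement_mono[OF assms(1), of lam1 lam2 x] lam
    unfolding phi_def by simp_all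
next
  fix lam :: real and x :: 'a
  assume "0 < lam"
  then have "phi A p lam x = 0 \<longleftrightarrow> resolvent A lam x = x" by (auto simp: phi_def)
  then show "phi A p lam x = 0 \<longleftrightarrow> 0 \<in> A x"
    using resolvent_eq_self_iff[OF assms(1) \<open>0 < lam\<close>] by simp
qed

end
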